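(* $\mathtt{Trellis}\subseteq\mathtt{incl}$-$\mathtt{ESO}$-$\mathtt{HORN}$.
   Context: Fix a finite alphabet $\Sigma$. A nonempty word $w=w_1\cdots w_n$ is represented by the structure $\langle w\rangle=([1,n];(Q_s)_{s\in\Sigma},\mathtt{min},\mathtt{max},\mathtt{suc},\mathtt{pred})$ with $Q_s(i)\iff w_i=s$, $\mathtt{min}(i)\iff i=1$, $\mathtt{max}(i)\iff i=n$, $\mathtt{suc}(i)=\min(i+1,n)$, $\mathtt{pred}(i)=\max(i-1,1)$. For an integer $a$, $x+a$ denotes $\mathtt{suc}^a(x)$ if $a\ge0$ and $\mathtt{pred}^{-a}(x)$ if $a<0$; $y-b=\mathtt{pred}^b(y)$. An inclusion Horn formula is $\Phi=\exists\mathbf{R}\forall x\forall y\,\psi(x,y)$, $\mathbf{R}$ a finite set of binary relation symbols, $\psi$ a conjunction of Horn clauses over $\{(Q_s)_{s\in\Sigma},\mathtt{min},\mathtt{max},\mathtt{suc},\mathtt{pred}\}\cup\mathbf{R}\cup\{=,\le,<\}$, each of the form $x\le y\wedge\delta_1\wedge\cdots\wedge\delta_r\to\delta_0$ with $\delta_0$ an atom $R(x,y)$ ($R\in\mathbf{R}$) or $\bot$, each $\delta_i$ one of: $U(x+a)$, $\neg U(x+a)$, $U(y+a)$, $\neg U(y+a)$ for $U\in\{(Q_s)_{s\in\Sigma},\mathtt{min},\mathtt{max}\}$, $a\in\mathbb Z$; $x=y$ or $x<y$; $S(x+a,y-b)\wedge x+a\le y-b$ with $S\in\mathbf{R}$,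 $a,b\ge0$. $\mathtt{incl}$-$\mathtt{ESO}$-$\mathtt{HORN}$ is the class of languages $\{w\in\Sigma^+:\langle w\rangle\models\Phi\}$. A one-way cellular automaton (OCA) is $(Q,\Sigma,Q_{accept},\{-1,0\},\delta)$ with finite $Q\supseteq\Sigma$, $Q_{accept}\subseteq Q$, $\delta:Q^2\to Q$; on input $w=w_1\cdots w_n$ it uses cells $1,\dots,n$ (cells outside permanently in a state $\sharp$), with $\langle c,1\rangle=w_c$ and $\langle c,t\rangle=\delta(\langle c-1,t-1\rangle,\langle c,t-1\rangle)$ for $t>1$. $\mathtt{Trellis}$ is the class of languages $L\subseteq\Sigma^+$ such that some OCA satisfies $w\in L\iff\langle n,n\rangle\in Q_{accept}$ for all $w$ of length $n$ (equivalently, languages accepted by trellis automata). *)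

theory Defs
  imports Main
begin

(* Words over a finite alphabet 'a are lists; positions are 1..n (as ints). *)

datatype var = VX | VY

datatype 'a upred = UQ 'a | UMin | UMax

(* body atoms of a Horn clause:
   HUn pol U v a   :  U(v+a) if pol, \<not>U(v+a) otherwise
   HEq             :  x = y
   HLess           :  x < y
   HRel S a b      :  S(x+a, y-b) \<and> x+a \<le> y-b   (a, b \<ge> 0)
   relation symbols are indexed by nat *)
datatype 'a hatom = HUn bool "'a upred" var int | HEq | HLess | HRel nat nat nat

datatype hhead = HdRel nat | HdBot

(* a clause is (body, head); the premise x \<le> y is implicit;
   a formula is a finite conjunction (list) of clauses *)
type_synonym 'a hclause = "'a hatom list \<times> hhead"
type_synonym 'a hformula = "'a hclause list"

(* x + a in <w> of length n: suc^a / pred^(-a), saturating at n / 1 *)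
definition shift :: "int \<Rightarrow> int \<Rightarrow> int \<Rightarrow> int" where
  "shift n i a = (if a \<ge> 0 then min (i + a) n else max (i + a) 1)"

fun upred_holds :: "'a list \<Rightarrow> 'a upred \<Rightarrow> int \<Rightarrow> bool" where
  "upred_holds w (UQ s) i = (w ! nat (i - 1) = s)"
| "upred_holds w UMin i = (i = 1)"
| "upred_holds w UMax i = (i = int (length w))"

fun hatom_holds :: "'a list \<Rightarrow> (nat \<Rightarrow> int \<Rightarrow> int \<Rightarrow> bool) \<Rightarrow> int \<Rightarrow> int \<Rightarrow> 'a hatom \<Rightarrow> bool" where
  "hatom_holds w Rs x y (HUn pol U v a) =
     (upred_holds w U (shift (int (length w)) (if v = VX then x else y) a) = pol)"
| "hatom_holds w Rs x y HEq = (x = y)"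
| "hatom_holds w Rs x y HLess = (x < y)"
| "hatom_holds w Rs x y (HRel S a b) =
     (let p = shift (int (length w)) x (int a); q = shift (int (length w)) y (- int b)
      in Rs S p q \<and> p \<le> q)"

fun hhead_holds :: "(nat \<Rightarrow> int \<Rightarrow> int \<Rightarrow> bool) \<Rightarrow> int \<Rightarrow> int \<Rightarrow> hhead \<Rightarrow> bool" where
  "hhead_holds Rs x y (HdRel R) = Rs R x y"
| "hhead_holds Rs x y HdBot = False"

definition hmodels :: "'a list \<Rightarrow> 'a hformula \<Rightarrow> bool" where
  "hmodels w \<Phi> = (\<exists>Rs. \<forall>x y. 1 \<le> x \<longrightarrow> x \<le> y \<longrightarrow> y \<le> int (length w) \<longrightarrow>
      (\<forall>(body, hd) \<in> set \<Phi>. (\<forall>d \<in> set body. hatom_holds w Rs x y d) \<longrightarrow> hhead_holds Rs x y hd))"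

definition incl_ESO_HORN :: "'a list set set" where
  "incl_ESO_HORN = {L. \<exists>\<Phi>. L = {w. w \<noteq> [] \<and> hmodels w \<Phi>}}"

(* states live in 'a + nat; input letters are the states Inl s;
   the boundary state \<sharp> is Inr 0 *)
definition sharp :: "'a + nat" where "sharp = Inr 0"

(* oca_state \<delta> w c t = state of cell c at time t+1; cell 0 is the boundary *)
fun oca_state :: "('a + nat \<Rightarrow> 'a + nat \<Rightarrow> 'a + nat) \<Rightarrow> 'a list \<Rightarrow> nat \<Rightarrow> nat \<Rightarrow> 'a + nat" where
  "oca_state \<delta> w c 0 = (if c = 0 then sharp else Inl (w ! (c - 1)))"
| "oca_state \<delta> w c (Suc t) =
     (if c = 0 then sharp else \<delta> (oca_state \<delta> w (c - 1) t) (oca_state \<delta> w c t))"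

definition Trellis :: "'a list set set" where
  "Trellis = {L. L \<subseteq> {w. w \<noteq> []} \<and>
     (\<exists>(Q :: ('a + nat) set) Qacc \<delta>. finite Q \<and> range Inl \<subseteq> Q \<and> Qacc \<subseteq> Q \<and>
        (\<forall>p \<in> insert sharp Q. \<forall>q \<in> Q. \<delta> p q \<in> Q) \<and>
        (\<forall>w. w \<noteq> [] \<longrightarrow> (w \<in> L \<longleftrightarrow> oca_state \<delta> w (length w) (length w - 1) \<in> Qacc)))}"

end

theory Submission
  imports Defs "HOL-Library.Countable"
begin

text \<open>Encode the trellis run by relations: \<open>R\<^sub>q(x, y)\<close> holds iff the triangle of the trellis
  with base \<open>w\<^sub>x \<dots> w\<^sub>y\<close> has apex state \<open>q\<close>, i.e. cell \<open>y\<close> is in state \<open>q\<close> after \<open>y - x\<close> steps.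
  Clauses with premise \<open>x = y\<close> fix the base, clauses with premise \<open>x < y\<close> derive
  \<open>R\<^bsub>\<delta> p q\<^esub>(x, y)\<close> from \<open>R\<^sub>p(x, y - 1)\<close> and \<open>R\<^sub>q(x + 1, y)\<close>, and a \<open>\<bottom>\<close>-clause forbids each
  rejecting apex at \<open>(1, n)\<close>. The run relation is then the least model, so the formula is
  satisfiable exactly when the run accepts.\<close>

lemma oca_state_in_states:
  assumes "range Inl \<subseteq> Q" and "\<forall>p \<in> insert sharp Q. \<forall>q \<in> Q. \<delta> p q \<in> Q" and "1 \<le> c"
  shows "oca_state \<delta> w c t \<in> Q"
  using assms(3)
proof (induction t arbitrary: c)
  case 0
  then show ?case using assms(1) by auto
next
  case (Suc t)
  have "oca_state \<delta> w (c - 1) t \<in> insert sharp Q"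
    using Suc.IH[of "c - 1"] by (cases "c - 1 = 0"; cases t) auto
  then show ?case using Suc.IH[OF Suc.prems] Suc.prems assms(2) by auto
qed

lemma oca_state_diagonal_step:
  assumes "x < y"
  shows "oca_state \<delta> w y (y - x) =
     \<delta> (oca_state \<delta> w (y - 1) (y - 1 - x)) (oca_state \<delta> w y (y - Suc x))"
proof -
  have "y - x = Suc (y - Suc x)" and "y - 1 - x = y - Suc x" using assms by auto
  then show ?thesis using assms by simp
qed

lemma shift_simps:
  "0 \<le> i \<Longrightarrow> i \<le> n \<Longrightarrow> shift n i 0 = i"
  "1 \<le> i \<Longrightarrow> shift n i (- 1) = max (i - 1) 1"
  "i + 1 \<le> n \<Longrightarrow> shift n i 1 = i + 1"
  by (auto simp: shift_def)

definition clause_holds :: "'a list \<Rightarrow> (nat \<Rightarrow> int \<Rightarrow> int \<Rightarrow> bool) \<Rightarrow> int \<Rightarrow> int \<Rightarrow> 'a hclause \<Rightarrow> bool" where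
  "clause_holds w Rs x y c \<longleftrightarrow>
     (\<forall>d \<in> set (fst c). hatom_holds w Rs x y d) \<longrightarrow> hhead_holds Rs x y (snd c)"

lemma hmodels_iff_clause_holds:
  "hmodels w \<Phi> \<longleftrightarrow> (\<exists>Rs. \<forall>x y. 1 \<le> x \<longrightarrow> x \<le> y \<longrightarrow> y \<le> int (length w) \<longrightarrow>
     (\<forall>c \<in> set \<Phi>. clause_holds w Rs x y c))"
  unfolding hmodels_def clause_holds_def by (simp add: case_prod_beta)

definition letter_clauses :: "'a::countable list \<Rightarrow> 'a hformula" where
  "letter_clauses as = [([HEq, HUn True (UQ s) VX 0], HdRel (to_nat (Inl s :: 'a + nat))). s \<leftarrow> as]"

definition transition_clauses ::
    "('a::countable + nat \<Rightarrow> 'a + nat \<Rightarrow> 'a + nat) \<Rightarrow> ('a + nat) list \<Rightarrow> 'a hformula" where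
  "transition_clauses \<delta> qs =
     [([HLess, HRel (to_nat p) 0 1, HRel (to_nat q) 1 0], HdRel (to_nat (\<delta> p q))). p \<leftarrow> qs, q \<leftarrow> qs]"

definition rejection_clauses :: "('a::countable + nat) set \<Rightarrow> ('a + nat) list \<Rightarrow> 'a hformula" where
  "rejection_clauses Qacc qs =
     [([HUn True UMin VX 0, HUn True UMax VY 0, HRel (to_nat q) 0 0], HdBot). q \<leftarrow> qs, q \<notin> Qacc]"

definition oca_formula ::
    "'a::countable list \<Rightarrow> ('a + nat \<Rightarrow> 'a + nat \<Rightarrow> 'a + nat) \<Rightarrow> ('a + nat) set \<Rightarrow> ('a + nat) list
     \<Rightarrow> 'a hformula" where
  "oca_formula as \<delta> Qacc qs = letter_clauses as @ transition_clauses \<delta> qs @ rejection_clauses Qacc qs"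

definition run_relation ::
    "('a::countable + nat \<Rightarrow> 'a + nat \<Rightarrow> 'a + nat) \<Rightarrow> 'a list \<Rightarrow> nat \<Rightarrow> int \<Rightarrow> int \<Rightarrow> bool" where
  "run_relation \<delta> w k x y \<longleftrightarrow> 1 \<le> x \<and> x \<le> y \<and> y \<le> int (length w) \<and>
     k = to_nat (oca_state \<delta> w (nat y) (nat (y - x)))"

lemma run_relation_letter_clause:
  assumes "c \<in> set (letter_clauses as)" "1 \<le> x" "x \<le> y" "y \<le> int (length w)"
  shows "clause_holds w (run_relation \<delta> w) x y c"
proof -
  obtain s where c: "c = ([HEq, HUn True (UQ s) VX 0], HdRel (to_nat (Inl s :: 'a + nat)))"
    using assms(1) unfolding letter_clauses_def by auto
  have "nat y - 1 = nat (x - 1)" if "x = y" using that assms by auto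
  then show ?thesis
    using assms(2-4) by (auto simp: c clause_holds_def run_relation_def shift_simps)
qed

lemma run_relation_transition_clause:
  assumes "c \<in> set (transition_clauses \<delta> qs)" "1 \<le> x" "x \<le> y" "y \<le> int (length w)"
  shows "clause_holds w (run_relation \<delta> w) x y c"
proof -
  obtain p q where c: "c = ([HLess, HRel (to_nat p) 0 1, HRel (to_nat q) 1 0], HdRel (to_nat (\<delta> p q)))"
    using assms(1) unfolding transition_clauses_def by auto
  have "run_relation \<delta> w (to_nat (\<delta> p q)) x y"
    if "x < y" "run_relation \<delta> w (to_nat p) x (y - 1)" "run_relation \<delta> w (to_nat q) (x + 1) y"
  proof -
    have "oca_state \<delta> w (nat y) (nat (y - x)) = \<delta> (oca_state \<delta> w (nat (y - 1)) (nat (y - 1 - x)))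
        (oca_state \<delta> w (nat y) (nat (y - (x + 1))))"
      using oca_state_diagonal_step[of "nat x" "nat y" \<delta> w] \<open>x < y\<close> assms(2)
      by (simp add: nat_diff_distrib' nat_add_distrib)
    then show ?thesis using that by (simp add: run_relation_def)
  qed
  then show ?thesis
    using assms(2-4) by (auto simp: c clause_holds_def shift_simps Let_def)
qed

lemma run_relation_rejection_clause:
  assumes "c \<in> set (rejection_clauses Qacc qs)" "1 \<le> x" "x \<le> y" "y \<le> int (length w)"
    and "oca_state \<delta> w (length w) (length w - 1) \<in> Qacc"
  shows "clause_holds w (run_relation \<delta> w) x y c"
proof -
  obtain q where "q \<notin> Qacc"
    and c: "c = ([HUn True UMin VX 0, HUn True UMax VY 0, HRel (to_nat q) 0 0], HdBot)"
    using assms(1) unfolding rejection_clauses_def by auto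
  moreover have "q = oca_state \<delta> w (length w) (length w - 1)"
    if "x = 1" "y = int (length w)" "run_relation \<delta> w (to_nat q) x y"
    using that by (simp add: run_relation_def nat_diff_distrib')
  ultimately show ?thesis
    using assms(2-5) by (auto simp: clause_holds_def shift_simps Let_def)
qed

lemma accepting_run_models_oca_formula:
  assumes "oca_state \<delta> w (length w) (length w - 1) \<in> Qacc"
  shows "hmodels w (oca_formula as \<delta> Qacc qs)"
  unfolding hmodels_iff_clause_holds oca_formula_def
  using run_relation_letter_clause run_relation_transition_clause
    run_relation_rejection_clause[OF _ _ _ _ assms]
  by (intro exI[of _ "run_relation \<delta> w"]) auto

lemma oca_formula_model_contains_run:
  assumes models: "\<And>x y c. 1 \<le> x \<Longrightarrow> x \<le> y \<Longrightarrow> y \<le> int (length w) \<Longrightarrow>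
      c \<in> set (oca_formula as \<delta> Qacc qs) \<Longrightarrow> clause_holds w Rs x y c"
    and letters: "set w \<subseteq> set as"
    and Inl_states: "range Inl \<subseteq> Q" and closed: "\<forall>p \<in> insert sharp Q. \<forall>q \<in> Q. \<delta> p q \<in> Q"
    and states: "Q \<subseteq> set qs"
    and xy: "1 \<le> x" "x \<le> y" "y \<le> length w"
  shows "Rs (to_nat (oca_state \<delta> w y (y - x))) (int x) (int y)"
  using xy
proof (induction "y - x" arbitrary: x y)
  case 0
  then have "x = y" by auto
  define s where "s = w ! (x - 1)"
  have "s \<in> set as" using letters 0 by (auto simp: s_def)
  then have "clause_holds w Rs (int x) (int y)
      ([HEq, HUn True (UQ s) VX 0], HdRel (to_nat (Inl s :: 'a + nat)))"
    using 0 by (intro models) (auto simp: oca_formula_def letter_clauses_def)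
  moreover have "nat (int x - 1) = x - 1" using 0 by auto
  ultimately show ?case
    using 0 \<open>x = y\<close> by (auto simp: clause_holds_def shift_simps s_def)
next
  case (Suc d)
  let ?p = "oca_state \<delta> w (y - 1) (y - 1 - x)"
  let ?q = "oca_state \<delta> w y (y - Suc x)"
  have "x < y" using Suc.hyps(2) by auto
  have "?p \<in> Q" "?q \<in> Q"
    using oca_state_in_states[OF Inl_states closed] Suc.prems \<open>x < y\<close> by auto
  then have "clause_holds w Rs (int x) (int y)
      ([HLess, HRel (to_nat ?p) 0 1, HRel (to_nat ?q) 1 0], HdRel (to_nat (\<delta> ?p ?q)))"
    using states Suc.prems by (intro models) (auto simp: oca_formula_def transition_clauses_def)
  moreover have "Rs (to_nat ?p) (int x) (int y - 1)" "Rs (to_nat ?q) (int x + 1) (int y)"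
    using Suc.hyps(1)[of "y - 1" x] Suc.hyps(1)[of y "Suc x"] Suc.hyps(2) Suc.prems \<open>x < y\<close>
    by (auto simp: add.commute)
  ultimately have "Rs (to_nat (\<delta> ?p ?q)) (int x) (int y)"
    using Suc.prems \<open>x < y\<close>
    by (auto simp: clause_holds_def shift_simps Let_def)
  then show ?case using oca_state_diagonal_step[of x y \<delta> w] \<open>x < y\<close> by simp
qed

lemma oca_formula_models_accepting_run:
  assumes "hmodels w (oca_formula as \<delta> Qacc qs)" "w \<noteq> []" "set w \<subseteq> set as"
    and "range Inl \<subseteq> Q" "\<forall>p \<in> insert sharp Q. \<forall>q \<in> Q. \<delta> p q \<in> Q" "Q \<subseteq> set qs"
  shows "oca_state \<delta> w (length w) (length w - 1) \<in> Qacc"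
proof (rule ccontr)
  let ?q = "oca_state \<delta> w (length w) (length w - 1)"
  assume "?q \<notin> Qacc"
  obtain Rs where models: "\<And>x y c. 1 \<le> x \<Longrightarrow> x \<le> y \<Longrightarrow> y \<le> int (length w) \<Longrightarrow>
      c \<in> set (oca_formula as \<delta> Qacc qs) \<Longrightarrow> clause_holds w Rs x y c"
    using assms(1) unfolding hmodels_iff_clause_holds by blast
  have "1 \<le> length w" using assms(2) by (simp add: Suc_le_eq)
  then have "?q \<in> set qs" using oca_state_in_states[OF assms(4,5)] assms(6) by auto
  with \<open>?q \<notin> Qacc\<close> have "clause_holds w Rs 1 (int (length w))
      ([HUn True UMin VX 0, HUn True UMax VY 0, HRel (to_nat ?q) 0 0], HdBot)"
    using \<open>1 \<le> length w\<close>
    by (intro models) (auto simp: oca_formula_def rejection_clauses_def)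
  moreover have "Rs (to_nat ?q) 1 (int (length w))"
    using oca_formula_model_contains_run[OF models assms(3-6), where x=1 and y="length w"] \<open>1 \<le> length w\<close>
    by simp
  ultimately show False
    using \<open>1 \<le> length w\<close>
    by (auto simp: clause_holds_def shift_simps Let_def)
qed

theorem lemma9:
  shows "(Trellis :: ('a::finite) list set set) \<subseteq> incl_ESO_HORN"
proof
  fix L :: "'a list set"
  assume "L \<in> Trellis"
  then obtain Q Qacc \<delta> where L_nonempty: "L \<subseteq> {w. w \<noteq> []}" and "finite (Q :: ('a + nat) set)"
    and Inl_states: "range Inl \<subseteq> Q" and closed: "\<forall>p \<in> insert sharp Q. \<forall>q \<in> Q. \<delta> p q \<in> Q"
    and L_accepted: "\<forall>w. w \<noteq> [] \<longrightarrow> (w \<in> L \<longleftrightarrow> oca_state \<delta> w (length w) (length w - 1) \<in> Qacc)"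
    unfolding Trellis_def by blast
  obtain qs where "set qs = Q" using \<open>finite Q\<close> finite_list by blast
  obtain as where "set as = (UNIV :: 'a set)" using finite_list finite_UNIV by blast
  have "L = {w. w \<noteq> [] \<and> hmodels w (oca_formula as \<delta> Qacc qs)}"
  proof (intro set_eqI iffI)
    fix w assume "w \<in> L"
    then show "w \<in> {w. w \<noteq> [] \<and> hmodels w (oca_formula as \<delta> Qacc qs)}"
      using L_nonempty L_accepted accepting_run_models_oca_formula by blast
  next
    fix w assume "w \<in> {w. w \<noteq> [] \<and> hmodels w (oca_formula as \<delta> Qacc qs)}"
    then show "w \<in> L"
      using L_accepted oca_formula_models_accepting_run[OF _ _ _ Inl_states closed]
        \<open>set qs = Q\<close> \<open>set as = UNIV\<close> by blast
  qed
  then show "L \<in> incl_ESO_HORN" unfolding incl_ESO_HORN_def by blast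
qed

end
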